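(* Let $(\Omega,\mathcal F)$ be a measurable space, $\mathcal X$ the set of bounded measurable functions, and $v$ a binary capacity with null set $\mathcal C_v=\{A\in\mathcal F: v(A)=0\}$. Then the Choquet integral $I_v:\mathcal X\to\mathbb R$ is convex (i.e. $I_v(\lambda X+(1-\lambda)Y)\le\lambda I_v(X)+(1-\lambda)I_v(Y)$ for all $\lambda\in[0,1]$, $X,Y\in\mathcal X$) if and only if $\mathcal C_v$ is closed under union (i.e. $A,B\in\mathcal C_v$ implies $A\cup B\in\mathcal C_v$).
   Context: A binary capacity is an increasing function $v:\mathcal F\to\{0,1\}$ (i.e. $v(A)\le v(B)$ for $A\subseteq B$) with $v(\varnothing)=0$, $v(\Omega)=1$. $I_v(X)=\int_{-\infty}^0(v(X\ge x)-1)\,\mathrm dx+\int_0^\infty v(X\ge x)\,\mathrm dx$. *)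

theory Defs
  imports "HOL-Analysis.Analysis"
begin

definition binary_capacity :: "'a measure \<Rightarrow> ('a set \<Rightarrow> real) \<Rightarrow> bool" where
  "binary_capacity M v \<longleftrightarrow>
     (\<forall>A\<in>sets M. v A \<in> {0, 1}) \<and>
     (\<forall>A\<in>sets M. \<forall>B\<in>sets M. A \<subseteq> B \<longrightarrow> v A \<le> v B) \<and>
     v {} = 0 \<and> v (space M) = 1"

definition bounded_measurable :: "'a measure \<Rightarrow> ('a \<Rightarrow> real) \<Rightarrow> bool" where
  "bounded_measurable M X \<longleftrightarrow> X \<in> borel_measurable M \<and> bounded (X ` space M)"

definition choquet :: "'a measure \<Rightarrow> ('a set \<Rightarrow> real) \<Rightarrow> ('a \<Rightarrow> real) \<Rightarrow> real" where
  "choquet M v X =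
     (LBINT x:{..0::real}. v {\<omega>\<in>space M. x \<le> X \<omega>} - 1) +
     (LBINT x:{0::real..}. v {\<omega>\<in>space M. x \<le> X \<omega>})"

end

theory Submission imports Defs begin

text \<open>For a binary capacity the function \<open>x \<mapsto> v {X \<ge> x}\<close> drops from 1 to 0 at a single
  point, and the Choquet integral of \<open>X\<close> is that jump point. If null sets are closed under
  union, then for \<open>t\<close> above \<open>\<lambda> I\<^sub>v X + (1 - \<lambda>) I\<^sub>v Y\<close> the level set
  \<open>{\<lambda> X + (1 - \<lambda>) Y \<ge> t}\<close> lies in the union of two null upper level sets of \<open>X\<close> and \<open>Y\<close>,
  which gives convexity. Conversely, if \<open>A\<close>, \<open>B\<close> are null but \<open>A \<union> B\<close> is not, then
  \<open>I\<^sub>v 1\<^sub>A = I\<^sub>v 1\<^sub>B = 0\<close> while \<open>I\<^sub>v ((1\<^sub>A + 1\<^sub>B) / 2) \<ge> 1/2\<close>.\<close>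

definition choquet_convex :: "'a measure \<Rightarrow> ('a set \<Rightarrow> real) \<Rightarrow> bool" where
  "choquet_convex M v \<longleftrightarrow>
     (\<forall>l::real. \<forall>X Y. 0 \<le> l \<and> l \<le> 1 \<and> bounded_measurable M X \<and> bounded_measurable M Y \<longrightarrow>
        choquet M v (\<lambda>\<omega>. l * X \<omega> + (1 - l) * Y \<omega>) \<le> l * choquet M v X + (1 - l) * choquet M v Y)"

definition capacity_null_Un_closed :: "'a measure \<Rightarrow> ('a set \<Rightarrow> real) \<Rightarrow> bool" where
  "capacity_null_Un_closed M v \<longleftrightarrow>
     (\<forall>A\<in>sets M. \<forall>B\<in>sets M. v A = 0 \<and> v B = 0 \<longrightarrow> v (A \<union> B) = 0)"

lemma binary_capacity_values:
  "binary_capacity M v \<Longrightarrow> A \<in> sets M \<Longrightarrow> v A = 0 \<or> v A = 1"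
  by (auto simp: binary_capacity_def)

lemma binary_capacity_null_subset:
  assumes "binary_capacity M v" "A \<in> sets M" "B \<in> sets M" "A \<subseteq> B" "v B = 0"
  shows "v A = 0"
  using assms binary_capacity_values[OF assms(1,2)] by (fastforce simp: binary_capacity_def)

lemma binary_capacity_full_superset:
  assumes "binary_capacity M v" "A \<in> sets M" "B \<in> sets M" "A \<subseteq> B" "v A = 1"
  shows "v B = 1"
  using assms binary_capacity_values[OF assms(1,3)] by (fastforce simp: binary_capacity_def)

lemma bounded_measurable_lincomb:
  assumes "bounded_measurable M X" "bounded_measurable M Y"
  shows "bounded_measurable M (\<lambda>\<omega>. a * X \<omega> + b * Y \<omega>)"
proof -
  obtain K L where K: "\<And>\<omega>. \<omega> \<in> space M \<Longrightarrow> \<bar>X \<omega>\<bar> \<le> K" and L: "\<And>\<omega>. \<omega> \<in> space M \<Longrightarrow> \<bar>Y \<omega>\<bar> \<le> L"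
    using assms unfolding bounded_measurable_def bounded_real by auto
  have "\<bar>a * X \<omega> + b * Y \<omega>\<bar> \<le> \<bar>a\<bar> * K + \<bar>b\<bar> * L" if "\<omega> \<in> space M" for \<omega>
  proof -
    have "\<bar>a * X \<omega>\<bar> \<le> \<bar>a\<bar> * K" "\<bar>b * Y \<omega>\<bar> \<le> \<bar>b\<bar> * L"
      using K[OF that] L[OF that] by (simp_all add: abs_mult mult_left_mono)
    then show ?thesis by linarith
  qed
  with assms show ?thesis unfolding bounded_measurable_def bounded_real by auto
qed

lemma bounded_measurable_indicator:
  assumes "A \<in> sets M"
  shows "bounded_measurable M (indicator A :: 'a \<Rightarrow> real)"
proof -
  have "indicator A ` space M \<subseteq> {0, 1::real}" by (auto simp: indicator_def)
  then have "bounded (indicator A ` space M :: real set)"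
    by (rule bounded_subset[OF finite_imp_bounded, rotated]) simp
  with assms show ?thesis unfolding bounded_measurable_def by simp
qed

lemma set_integral_half_lines_step:
  fixes f :: "real \<Rightarrow> real"
  assumes below: "\<And>x. x < c \<Longrightarrow> f x = 1" and above: "\<And>x. x > c \<Longrightarrow> f x = 0"
  shows "(LBINT x:{..0}. f x - 1) + (LBINT x:{0..}. f x) = c"
proof -
  have f_eq: "f = (\<lambda>x. if x < c then 1 else if x = c then f c else 0)"
    using below above by (auto simp: fun_eq_iff)
  have [measurable]: "f \<in> borel_measurable borel"
    by (subst f_eq) measurable
  note ae = AE_lborel_singleton[of c]
  have "(LBINT x:{..0}. f x - 1) = (LBINT x:{..0}. - indicator {min c 0<..0} x)"
  proof (rule set_lebesgue_integral_cong_AE)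
    show "AE x\<in>{..0} in lborel. f x - 1 = - indicator {min c 0<..0} x"
      using ae by eventually_elim (auto simp: below above indicator_def dest!: linorder_neqE)
  qed auto
  also have "\<dots> = - measure lborel {min c 0<..0}"
  proof -
    have "(\<lambda>x. indicator {..0} x *\<^sub>R - indicator {min c 0<..0} x) = (\<lambda>x. - indicator {min c 0<..0} x :: real)"
      by (auto simp: indicator_def)
    then show ?thesis unfolding set_lebesgue_integral_def by simp
  qed
  finally have neg: "(LBINT x:{..0}. f x - 1) = - measure lborel {min c 0<..0}" .
  have "(LBINT x:{0..}. f x) = (LBINT x:{0..}. indicator {0..<max c 0} x)"
  proof (rule set_lebesgue_integral_cong_AE)
    show "AE x\<in>{0..} in lborel. f x = indicator {0..<max c 0} x"
      using ae by eventually_elim (auto simp: below above indicator_def dest!: linorder_neqE)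
  qed auto
  also have "\<dots> = measure lborel {0..<max c 0}"
  proof -
    have "(\<lambda>x. indicator {0..} x *\<^sub>R indicator {0..<max c 0} x) = (indicator {0..<max c 0} :: real \<Rightarrow> real)"
      by (auto simp: indicator_def)
    then show ?thesis unfolding set_lebesgue_integral_def by simp
  qed
  finally have pos: "(LBINT x:{0..}. f x) = measure lborel {0..<max c 0}" .
  show ?thesis unfolding neg pos by simp
qed

lemma choquet_eq_jump_point:
  assumes "\<And>x. x < c \<Longrightarrow> v {\<omega>\<in>space M. x \<le> X \<omega>} = 1"
    and "\<And>x. x > c \<Longrightarrow> v {\<omega>\<in>space M. x \<le> X \<omega>} = 0"
  shows "choquet M v X = c"
  unfolding choquet_def by (rule set_integral_half_lines_step) (use assms in auto)

lemma binary_capacity_jump_point: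
  assumes bc: "binary_capacity M v" and bm: "bounded_measurable M X"
  obtains c where "\<And>x. x < c \<Longrightarrow> v {\<omega>\<in>space M. x \<le> X \<omega>} = 1"
    and "\<And>x. x > c \<Longrightarrow> v {\<omega>\<in>space M. x \<le> X \<omega>} = 0"
proof -
  have [measurable]: "X \<in> borel_measurable M"
    using bm by (simp add: bounded_measurable_def)
  have level_sets: "{\<omega>\<in>space M. x \<le> X \<omega>} \<in> sets M" for x
    by measurable
  obtain K where K: "\<And>\<omega>. \<omega> \<in> space M \<Longrightarrow> \<bar>X \<omega>\<bar> \<le> K"
    using bm unfolding bounded_measurable_def bounded_real by auto
  define S where "S = {x. v {\<omega>\<in>space M. x \<le> X \<omega>} = 1}"
  have "-K \<le> X \<omega>" if "\<omega> \<in> space M" for \<omega>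
    using K[OF that] by linarith
  then have "{\<omega>\<in>space M. -K \<le> X \<omega>} = space M" by blast
  then have "-K \<in> S"
    using bc by (simp add: S_def binary_capacity_def)
  then have "S \<noteq> {}" by auto
  have "x \<le> K" if "x \<in> S" for x
  proof (rule ccontr)
    assume "\<not> x \<le> K"
    then have "X \<omega> < x" if "\<omega> \<in> space M" for \<omega>
      using K[OF that] by linarith
    then have "{\<omega>\<in>space M. x \<le> X \<omega>} = {}" by force
    with \<open>x \<in> S\<close> bc show False by (simp add: S_def binary_capacity_def)
  qed
  then have "bdd_above S" by (auto simp: bdd_above_def)
  show thesis
  proof
    fix x assume "x < Sup S"
    then obtain y where "y \<in> S" "x < y"
      using less_cSup_iff[OF \<open>S \<noteq> {}\<close> \<open>bdd_above S\<close>] by blast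
    then have "{\<omega>\<in>space M. y \<le> X \<omega>} \<subseteq> {\<omega>\<in>space M. x \<le> X \<omega>}" by auto
    from binary_capacity_full_superset[OF bc level_sets level_sets this] \<open>y \<in> S\<close>
    show "v {\<omega>\<in>space M. x \<le> X \<omega>} = 1" by (simp add: S_def)
  next
    fix x assume "x > Sup S"
    then have "x \<notin> S"
      using cSup_upper \<open>bdd_above S\<close> not_le by blast
    then show "v {\<omega>\<in>space M. x \<le> X \<omega>} = 0"
      using binary_capacity_values[OF bc level_sets, of x] by (auto simp: S_def)
  qed
qed

lemma binary_capacity_choquet_jump:
  assumes "binary_capacity M v" and "bounded_measurable M X"
  shows "x < choquet M v X \<Longrightarrow> v {\<omega>\<in>space M. x \<le> X \<omega>} = 1"
    and "choquet M v X < x \<Longrightarrow> v {\<omega>\<in>space M. x \<le> X \<omega>} = 0"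
proof -
  obtain c where "\<And>x. x < c \<Longrightarrow> v {\<omega>\<in>space M. x \<le> X \<omega>} = 1"
    and "\<And>x. x > c \<Longrightarrow> v {\<omega>\<in>space M. x \<le> X \<omega>} = 0"
    using binary_capacity_jump_point[OF assms] by blast
  moreover from this have "choquet M v X = c" by (rule choquet_eq_jump_point)
  ultimately show "x < choquet M v X \<Longrightarrow> v {\<omega>\<in>space M. x \<le> X \<omega>} = 1"
    and "choquet M v X < x \<Longrightarrow> v {\<omega>\<in>space M. x \<le> X \<omega>} = 0" by simp_all
qed

lemma choquet_le_binary_capacity:
  assumes bc: "binary_capacity M v" and bm: "bounded_measurable M X"
    and null: "\<And>x. x > d \<Longrightarrow> v {\<omega>\<in>space M. x \<le> X \<omega>} = 0"
  shows "choquet M v X \<le> d"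
proof (rule ccontr)
  assume "\<not> choquet M v X \<le> d"
  then obtain m where "d < m" "m < choquet M v X" using dense not_le by blast
  with binary_capacity_choquet_jump(1)[OF bc bm, of m] null[of m] show False by simp
qed

lemma choquet_ge_binary_capacity:
  assumes bc: "binary_capacity M v" and bm: "bounded_measurable M X"
    and full: "\<And>x. x < d \<Longrightarrow> v {\<omega>\<in>space M. x \<le> X \<omega>} = 1"
  shows "d \<le> choquet M v X"
proof (rule ccontr)
  assume "\<not> d \<le> choquet M v X"
  then obtain m where "choquet M v X < m" "m < d" using dense not_le by blast
  with binary_capacity_choquet_jump(2)[OF bc bm, of m] full[of m] show False by simp
qed

lemma choquet_convex_if_null_Un_closed:
  assumes bc: "binary_capacity M v" and closed: "capacity_null_Un_closed M v"
  shows "choquet_convex M v"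
  unfolding choquet_convex_def
proof (intro allI impI, elim conjE)
  fix l :: real and X Y
  assume l: "0 \<le> l" "l \<le> 1" and bX: "bounded_measurable M X" and bY: "bounded_measurable M Y"
  have [measurable]: "X \<in> borel_measurable M" "Y \<in> borel_measurable M"
    using bX bY by (simp_all add: bounded_measurable_def)
  define a where "a = choquet M v X"
  define b where "b = choquet M v Y"
  show "choquet M v (\<lambda>\<omega>. l * X \<omega> + (1 - l) * Y \<omega>) \<le> l * a + (1 - l) * b"
  proof (rule choquet_le_binary_capacity[OF bc bounded_measurable_lincomb[OF bX bY]])
    fix t assume "l * a + (1 - l) * b < t"
    define e where "e = t - (l * a + (1 - l) * b)"
    have "e > 0" using \<open>l * a + (1 - l) * b < t\<close> by (simp add: e_def)
    let ?A = "{\<omega>\<in>space M. a + e \<le> X \<omega>}" and ?B = "{\<omega>\<in>space M. b + e \<le> Y \<omega>}"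
    have "{\<omega>\<in>space M. t \<le> l * X \<omega> + (1 - l) * Y \<omega>} \<subseteq> ?A \<union> ?B"
    proof (rule subsetI, rule ccontr)
      fix \<omega> assume "\<omega> \<in> {\<omega>\<in>space M. t \<le> l * X \<omega> + (1 - l) * Y \<omega>}" "\<omega> \<notin> ?A \<union> ?B"
      then have "t \<le> l * X \<omega> + (1 - l) * Y \<omega>" "X \<omega> - (a + e) < 0" "Y \<omega> - (b + e) < 0"
        by auto
      moreover have "l * (X \<omega> - (a + e)) + (1 - l) * (Y \<omega> - (b + e)) < 0"
        using calculation(2,3) l by (intro convex_bound_lt) auto
      ultimately show False by (simp add: e_def algebra_simps)
    qed
    moreover have "?A \<in> sets M" "?B \<in> sets M"
      "{\<omega>\<in>space M. t \<le> l * X \<omega> + (1 - l) * Y \<omega>} \<in> sets M"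
      by measurable
    moreover have "v ?A = 0" "v ?B = 0"
      using binary_capacity_choquet_jump(2)[OF bc bX, of "a + e"]
        binary_capacity_choquet_jump(2)[OF bc bY, of "b + e"] \<open>e > 0\<close>
      by (simp_all add: a_def b_def)
    ultimately show "v {\<omega>\<in>space M. t \<le> l * X \<omega> + (1 - l) * Y \<omega>} = 0"
      using closed unfolding capacity_null_Un_closed_def
      by (meson binary_capacity_null_subset[OF bc] sets.Un)
  qed
qed

lemma null_Un_closed_if_choquet_convex:
  assumes bc: "binary_capacity M v" and convex: "choquet_convex M v"
  shows "capacity_null_Un_closed M v"
  unfolding capacity_null_Un_closed_def
proof (intro ballI impI, elim conjE)
  fix A B assume A[measurable]: "A \<in> sets M" and B[measurable]: "B \<in> sets M"
    and "v A = 0" "v B = 0"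
  have choquet_null: "choquet M v (indicator C) \<le> 0" if [measurable]: "C \<in> sets M" and "v C = 0" for C
  proof (rule choquet_le_binary_capacity[OF bc bounded_measurable_indicator[OF that(1)]])
    fix x :: real assume "x > 0"
    then have "{\<omega>\<in>space M. x \<le> indicator C \<omega>} \<subseteq> C" by (auto simp: indicator_def)
    from binary_capacity_null_subset[OF bc _ that(1) this that(2)]
    show "v {\<omega>\<in>space M. x \<le> indicator C \<omega>} = 0" by measurable
  qed
  let ?Z = "\<lambda>\<omega>. 1/2 * indicator A \<omega> + (1 - 1/2) * indicator B \<omega> :: real"
  show "v (A \<union> B) = 0"
  proof (rule ccontr)
    assume "v (A \<union> B) \<noteq> 0"
    then have "v (A \<union> B) = 1"
      using binary_capacity_values[OF bc, of "A \<union> B"] by auto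
    have "1/2 \<le> choquet M v ?Z"
    proof (rule choquet_ge_binary_capacity[OF bc])
      show "bounded_measurable M ?Z"
        by (intro bounded_measurable_lincomb bounded_measurable_indicator A B)
    next
      fix x :: real assume "x < 1/2"
      then have "A \<union> B \<subseteq> {\<omega>\<in>space M. x \<le> ?Z \<omega>}"
        using sets.sets_into_space[OF A] sets.sets_into_space[OF B] by (auto simp: indicator_def)
      from binary_capacity_full_superset[OF bc _ _ this \<open>v (A \<union> B) = 1\<close>]
      show "v {\<omega>\<in>space M. x \<le> ?Z \<omega>} = 1" by measurable
    qed
    also have "\<dots> \<le> 1/2 * choquet M v (indicator A) + (1 - 1/2) * choquet M v (indicator B)"
      using convex[unfolded choquet_convex_def, rule_format, of "1/2" "indicator A" "indicator B"]
      by (simp add: bounded_measurable_indicator)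
    also have "\<dots> \<le> 0"
      using choquet_null[OF A \<open>v A = 0\<close>] choquet_null[OF B \<open>v B = 0\<close>] by simp
    finally show False by simp
  qed
qed

theorem proposition4:
  fixes M :: "'a measure" and v :: "'a set \<Rightarrow> real"
  assumes "binary_capacity M v"
  shows "(\<forall>l::real. \<forall>X Y. 0 \<le> l \<and> l \<le> 1 \<and> bounded_measurable M X \<and> bounded_measurable M Y \<longrightarrow>
            choquet M v (\<lambda>\<omega>. l * X \<omega> + (1 - l) * Y \<omega>)
              \<le> l * choquet M v X + (1 - l) * choquet M v Y)
         \<longleftrightarrow>
         (\<forall>A\<in>sets M. \<forall>B\<in>sets M. v A = 0 \<and> v B = 0 \<longrightarrow> v (A \<union> B) = 0)"
proof -
  have "choquet_convex M v \<longleftrightarrow> capacity_null_Un_closed M v"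
    using choquet_convex_if_null_Un_closed[OF assms] null_Un_closed_if_choquet_convex[OF assms] by blast
  then show ?thesis unfolding choquet_convex_def capacity_null_Un_closed_def .
qed

end
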